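(* Let $X$ be a finite biquandle, let $D$ be a knotoid diagram in $S^2$ or $\mathbb{R}^2$ with an $X$-coloring $f$, and let $D'$ be obtained from $D$ by a single Reidemeister move performed in a disk disjoint from the endpoints, with $f'$ the unique $X$-coloring of $D'$ agreeing with $f$ outside that disk. Then the biquandle longitude weights agree: $BLW(D'_{f'})=BLW(D_f)$ as bijections $X\to X$.
   Context: A biquandle is a set $X$ together with, for each $b\in X$, two bijections $\alpha_b,\beta_b:X\to X$ such that: (i) $\alpha_a(a)=\beta_a(a)$ for all $a$; (ii) $S(a,b)=(\alpha_a(b),\beta_b(a))$ is an invertible map $X\times X\to X\times X$; (iii) $\alpha_{\alpha_a(b)}\alpha_a=\alpha_{\beta_b(a)}\alpha_b$, $\beta_{\alpha_a(b)}\alpha_a=\alpha_{\beta_b(a)}\beta_b$, $\beta_{\beta_a(b)}\beta_a=\beta_{\alpha_b(a)}\beta_b$ for all $a,b$. A knotoid diagram in $\Sigma=S^2$ or $\mathbb{R}^2$ is a generic immersion of $[0,1]$ with finitely many transverse double points (crossings) with over/under information, oriented from the tail (image of $0$) to the head (image of $1$), these being distinct non-crossing points; Reidemeister moves on knotoid diagrams are the usual three moves performed in disks disjoint from the endpoints. A semiarc is a piece of the curve between consecutive crossings, or between an endpoint and a crossing. Crossings carry the usual sign $\pm 1$. An $X$-coloring of a diagram assigns an element of $X$ to each semiarc such that: at a positive crossing, if the incoming under-semiarc is colored $a$ and the outgoing over-semiarc is colored $b$, then the outgoing under-semiarc is colored $\beta_b(a)$ and the incoming over-semiarc is colored $\alpha_a(b)$;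 at a negative crossing, if the outgoing under-semiarc is colored $a$ and the incoming over-semiarc is colored $b$, then the incoming under-semiarc is colored $\beta_b(a)$ and the outgoing over-semiarc is colored $\alpha_a(b)$. For any Reidemeister move, each coloring before the move extends uniquely to a coloring after the move agreeing outside the disk of the move. Biquandle longitude weight: traveling along the colored diagram $D_f$ from tail to head, each crossing is passed twice. To each pass assign the bijection $\beta_L^{jk}:X\to X$, where $j\in\{\pm1\}$ is the sign of the crossing, $k=1$ if the pass goes under and $k=-1$ if it goes over, and $L\in X$ is the color of the semiarc of the other strand at that crossing which lies to the right of the direction of travel. Then $BLW(D_f)$ is the composition of these bijections in the order they are encountered, the first encountered being applied first (i.e. if the passes give $\beta_{L_1}^{e_1},\dots,\beta_{L_m}^{e_m}$ in order, $BLW(D_f)=\beta_{L_m}^{e_m}\circ\cdots\circ\beta_{L_1}^{e_1}$); for a crossingless diagram it is the identity. *)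

theory Defs
  imports Main
begin

text \<open>A biquandle on a (finite) type 'x.  alpha b and beta b are the bijections
  alpha_b and beta_b, i.e. alpha b x = alpha_b(x).\<close>

definition is_biquandle :: "('x \<Rightarrow> 'x \<Rightarrow> 'x) \<Rightarrow> ('x \<Rightarrow> 'x \<Rightarrow> 'x) \<Rightarrow> bool" where
  "is_biquandle \<alpha> \<beta> \<longleftrightarrow>
     (\<forall>b. bij (\<alpha> b) \<and> bij (\<beta> b)) \<and>
     (\<forall>a. \<alpha> a a = \<beta> a a) \<and>
     bij (\<lambda>(a, b). (\<alpha> a b, \<beta> b a)) \<and>
     (\<forall>a b. \<alpha> (\<alpha> a b) \<circ> \<alpha> a = \<alpha> (\<beta> b a) \<circ> \<alpha> b \<and>
            \<beta> (\<alpha> a b) \<circ> \<alpha> a = \<alpha> (\<beta> b a) \<circ> \<beta> b \<and>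
            \<beta> (\<beta> a b) \<circ> \<beta> a = \<beta> (\<alpha> b a) \<circ> \<beta> b)"

text \<open>A pass of the curve through a crossing: (crossing name, True iff the pass goes over).
  A diagram is the list P of passes from tail to head together with a sign function
  sg (sg c = True iff crossing c is positive).  Semiarc k (0 \<le> k \<le> length P) is the piece
  of the curve between pass k-1 and pass k (semiarc 0 starts at the tail, semiarc length P
  ends at the head).\<close>

type_synonym pass = "nat \<times> bool"

definition wf_diag :: "pass list \<Rightarrow> bool" where
  "wf_diag P \<longleftrightarrow> distinct P \<and> (\<forall>c b. (c, b) \<in> set P \<longrightarrow> (c, \<not> b) \<in> set P)"

text \<open>X-colorings: a list of colors indexed by semiarcs.  For crossing c with under pass at
  position p and over pass at position q: incoming/outgoing under semiarcs are p / p+1,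
  incoming/outgoing over semiarcs are q / q+1.\<close>

definition coloring :: "('x \<Rightarrow> 'x \<Rightarrow> 'x) \<Rightarrow> ('x \<Rightarrow> 'x \<Rightarrow> 'x) \<Rightarrow> pass list \<Rightarrow> (nat \<Rightarrow> bool) \<Rightarrow> 'x list \<Rightarrow> bool" where
  "coloring \<alpha> \<beta> P sg C \<longleftrightarrow> length C = Suc (length P) \<and>
     (\<forall>p q c. p < length P \<longrightarrow> q < length P \<longrightarrow> P ! p = (c, False) \<longrightarrow> P ! q = (c, True) \<longrightarrow>
        (if sg c
         then C ! Suc p = \<beta> (C ! Suc q) (C ! p) \<and> C ! q = \<alpha> (C ! p) (C ! Suc q)
         else C ! p = \<beta> (C ! q) (C ! Suc p) \<and> C ! Suc q = \<alpha> (C ! Suc p) (C ! q)))"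

definition pos_of :: "pass list \<Rightarrow> pass \<Rightarrow> nat" where
  "pos_of P x = (THE i. i < length P \<and> P ! i = x)"

text \<open>With the standard sign convention,
  the semiarc of the other strand to the right of the direction of travel is: when passing
  under a positive crossing, the outgoing over semiarc; under a negative crossing, the incoming
  over semiarc; over a positive crossing, the incoming under semiarc; over a negative crossing,
  the outgoing under semiarc.\<close>

definition pass_map :: "('x \<Rightarrow> 'x \<Rightarrow> 'x) \<Rightarrow> pass list \<Rightarrow> (nat \<Rightarrow> bool) \<Rightarrow> 'x list \<Rightarrow> nat \<Rightarrow> ('x \<Rightarrow> 'x)" where
  "pass_map \<beta> P sg C k =
     (let c = fst (P ! k); ov = snd (P ! k);
          p = pos_of P (c, False); q = pos_of P (c, True)
      in if \<not> ov
         then (if sg c then \<beta> (C ! Suc q) else inv (\<beta> (C ! q)))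
         else (if sg c then inv (\<beta> (C ! p)) else \<beta> (C ! Suc p)))"

definition blw :: "('x \<Rightarrow> 'x \<Rightarrow> 'x) \<Rightarrow> pass list \<Rightarrow> (nat \<Rightarrow> bool) \<Rightarrow> 'x list \<Rightarrow> ('x \<Rightarrow> 'x)" where
  "blw \<beta> P sg C = foldl (\<lambda>acc k. pass_map \<beta> P sg C k \<circ> acc) id [0..<length P]"

text \<open>Each move acts on segments of two consecutive passes, given by their start positions S.
  Semiarc k lies inside the disk of the move iff it lies strictly between the two passes of
  a segment.\<close>

definition seg_pos :: "nat set \<Rightarrow> nat set" where
  "seg_pos S = S \<union> Suc ` S"

definition inside :: "nat set \<Rightarrow> nat \<Rightarrow> bool" where
  "inside S k \<longleftrightarrow> 0 < k \<and> k - 1 \<in> S"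

definition agree_rm :: "pass list \<Rightarrow> 'x list \<Rightarrow> nat set \<Rightarrow> 'x list \<Rightarrow> bool" where
  "agree_rm P C S C' \<longleftrightarrow>
     (\<forall>k \<le> length P. \<not> inside S k \<longrightarrow> C' ! (k - card {j \<in> seg_pos S. j < k}) = C ! k)"

definition sgn_agree :: "pass list \<Rightarrow> (nat \<Rightarrow> bool) \<Rightarrow> (nat \<Rightarrow> bool) \<Rightarrow> bool" where
  "sgn_agree P' sg sg' \<longleftrightarrow> (\<forall>c \<in> fst ` set P'. sg' c = sg c)"

definition R1_reduce :: "pass list \<times> (nat \<Rightarrow> bool) \<times> 'x list \<Rightarrow> pass list \<times> (nat \<Rightarrow> bool) \<times> 'x list \<Rightarrow> bool" where
  "R1_reduce D D' \<longleftrightarrow> (case D of (P, sg, C) \<Rightarrow> case D' of (P', sg', C') \<Rightarrow>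
     (\<exists>i. Suc i < length P \<and> fst (P ! i) = fst (P ! Suc i) \<and>
          P' = nths P (- seg_pos {i}) \<and> sgn_agree P' sg sg' \<and> agree_rm P C {i} C'))"

definition R2_reduce :: "pass list \<times> (nat \<Rightarrow> bool) \<times> 'x list \<Rightarrow> pass list \<times> (nat \<Rightarrow> bool) \<times> 'x list \<Rightarrow> bool" where
  "R2_reduce D D' \<longleftrightarrow> (case D of (P, sg, C) \<Rightarrow> case D' of (P', sg', C') \<Rightarrow>
     (\<exists>i j c d ov. Suc i < j \<and> Suc j < length P \<and> c \<noteq> d \<and>
          P ! i = (c, ov) \<and> P ! Suc i = (d, ov) \<and>
          ((P ! j = (c, \<not> ov) \<and> P ! Suc j = (d, \<not> ov)) \<or> (P ! j = (d, \<not> ov) \<and> P ! Suc j = (c, \<not> ov))) \<and>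
          sg c \<noteq> sg d \<and>
          P' = nths P (- seg_pos {i, j}) \<and> sgn_agree P' sg sg' \<and> agree_rm P C {i, j} C'))"

definition sgn_int :: "bool \<Rightarrow> int" where
  "sgn_int b = (if b then 1 else -1)"

text \<open>R3: top strand segment at t (over at x and y), middle strand segment at m (under at x,
  over at z), bottom strand segment at b (under at y and z).  The move reverses the order of the
  two passes in each segment.  The sign condition characterises exactly the configurations
  realised by three strands bounding a triangle: with s_T, s_M, s_B = +1 iff x (resp. x, y)
  comes first on the top (resp. middle, bottom) segment,
  eps(x) s_T s_M = eps(y) s_T s_B = eps(z) s_M s_B (= orientation of the triangle).\<close>

definition R3_move :: "pass list \<times> (nat \<Rightarrow> bool) \<times> 'x list \<Rightarrow> pass list \<times> (nat \<Rightarrow> bool) \<times> 'x list \<Rightarrow> bool" where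
  "R3_move D D' \<longleftrightarrow> (case D of (P, sg, C) \<Rightarrow> case D' of (P', sg', C') \<Rightarrow>
     (\<exists>t m b x y z. Suc t < length P \<and> Suc m < length P \<and> Suc b < length P \<and>
          {t, Suc t} \<inter> {m, Suc m} = {} \<and> {t, Suc t} \<inter> {b, Suc b} = {} \<and> {m, Suc m} \<inter> {b, Suc b} = {} \<and>
          x \<noteq> y \<and> x \<noteq> z \<and> y \<noteq> z \<and>
          {P ! t, P ! Suc t} = {(x, True), (y, True)} \<and>
          {P ! m, P ! Suc m} = {(x, False), (z, True)} \<and>
          {P ! b, P ! Suc b} = {(y, False), (z, False)} \<and>
          (let sT = sgn_int (P ! t = (x, True)); sM = sgn_int (P ! m = (x, False));
               sB = sgn_int (P ! b = (y, False))
           in sgn_int (sg x) * sT * sM = sgn_int (sg y) * sT * sB \<and>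
              sgn_int (sg y) * sT * sB = sgn_int (sg z) * sM * sB) \<and>
          length P' = length P \<and>
          (\<forall>k < length P. P' ! k = (if k \<in> {t, m, b} then P ! Suc k
                                    else if 0 < k \<and> k - 1 \<in> {t, m, b} then P ! (k - 1)
                                    else P ! k)) \<and>
          sgn_agree P' sg sg' \<and>
          (\<forall>k \<le> length P. \<not> inside {t, m, b} k \<longrightarrow> C' ! k = C ! k)))"

definition reid_move :: "pass list \<times> (nat \<Rightarrow> bool) \<times> 'x list \<Rightarrow> pass list \<times> (nat \<Rightarrow> bool) \<times> 'x list \<Rightarrow> bool" where
  "reid_move D D' \<longleftrightarrow>
     R1_reduce D D' \<or> R1_reduce D' D \<or> R2_reduce D D' \<or> R2_reduce D' D \<or> R3_move D D' \<or> R3_move D' D"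

end

theory Submission
  imports Defs
begin

text \<open>The longitude weight is the composite, in the order of travel, of one bijection per
  pass, and the bijection of a pass depends only on the pass, the sign of its crossing and the
  two colours around the other pass of that crossing. A move changes the diagram only inside its
  disk, so every pass outside the disk keeps its bijection, and it suffices to compare the
  segments of two consecutive passes inside the disk. For R1 and R2 the two bijections of each
  deleted segment are mutually inverse, because the colours on both sides of the segment agree,
  so deleting it does not change the composite. For R3 each of the three segments is traversed
  in the opposite order after the move, and the composite of its two bijections is preserved by
  the relation \<open>\<beta>\<^bsub>\<beta> b a\<^esub> \<circ> \<beta>\<^sub>b = \<beta>\<^bsub>\<alpha> a b\<^esub> \<circ> \<beta>\<^sub>a\<close> of the biquandle axioms at one of
  the three crossings of the triangle, coloured before or after the move.\<close>

section \<open>Composites of lists of maps\<close>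

definition comp_list :: "('a \<Rightarrow> 'a) list \<Rightarrow> 'a \<Rightarrow> 'a" where
  "comp_list fs = fold (\<circ>) fs id"

lemma fold_comp_eq_comp_list:
  fixes g :: "'a \<Rightarrow> 'a"
  shows "fold (\<circ>) fs g = comp_list fs \<circ> g"
proof (induction fs arbitrary: g)
  case (Cons f fs)
  have "comp_list (f # fs) = comp_list fs \<circ> f"
    using Cons.IH[of f] unfolding comp_list_def fold_Cons comp_apply comp_id .
  then show ?case using Cons.IH[of "f \<circ> g"] by (simp add: o_assoc)
qed (simp add: comp_list_def)

lemma comp_list_Nil [simp]: "comp_list [] = id"
  by (simp add: comp_list_def)

lemma comp_list_append [simp]: "comp_list (xs @ ys) = comp_list ys \<circ> comp_list xs"
  using fold_comp_eq_comp_list[of ys "comp_list xs"] by (simp add: comp_list_def)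

lemma comp_list_Cons: "comp_list (f # fs) = comp_list fs \<circ> f"
  using comp_list_append[of "[f]" fs] by (simp add: comp_list_def)

lemma comp_list_eq_if_pairs_agree:
  assumes len: "length gs = length fs"
    and T: "\<And>s. s \<in> T \<Longrightarrow> Suc s < length fs \<and> Suc s \<notin> T"
    and outside: "\<And>k. k < length fs \<Longrightarrow> k \<notin> T \<Longrightarrow> k \<notin> Suc ` T \<Longrightarrow> gs ! k = fs ! k"
    and pairs: "\<And>s. s \<in> T \<Longrightarrow> gs ! Suc s \<circ> gs ! s = fs ! Suc s \<circ> fs ! s"
  shows "comp_list gs = comp_list fs"
proof -
  have "comp_list (take n gs) = comp_list (take n fs)" if "n \<le> length fs" "n \<notin> Suc ` T" for n
    using that
  proof (induction n rule: less_induct)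
    case (less n)
    show ?case
    proof (cases n)
      case (Suc k)
      show ?thesis
      proof (cases "k \<in> Suc ` T")
        case False
        have "k \<notin> T" using less.prems(2) Suc by blast
        then show ?thesis
          using less.IH[of k] less.prems(1) outside[of k] False Suc len
          by (simp add: take_Suc_conv_app_nth)
      next
        case True
        then obtain s where s: "k = Suc s" "s \<in> T" by blast
        have "s \<notin> Suc ` T" using s(2) T by blast
        then show ?thesis
          using less.IH[of s] less.prems(1) pairs[OF s(2)] Suc s len
          by (simp add: take_Suc_conv_app_nth comp_list_Cons o_assoc)
      qed
    qed simp
  qed
  moreover have "length fs \<notin> Suc ` T" using T by fastforce
  ultimately have "comp_list (take (length fs) gs) = comp_list (take (length fs) fs)" by blast
  then show ?thesis using len by simp
qed

definition remove_pair :: "nat \<Rightarrow> 'a list \<Rightarrow> 'a list" where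
  "remove_pair i xs = take i xs @ drop (Suc (Suc i)) xs"

definition skip_pair :: "nat \<Rightarrow> nat \<Rightarrow> nat" where
  "skip_pair i k = (if k < i then k else Suc (Suc k))"

lemma length_remove_pair: "Suc i < length xs \<Longrightarrow> length (remove_pair i xs) = length xs - 2"
  by (simp add: remove_pair_def)

lemma nth_remove_pair:
  "Suc i < length xs \<Longrightarrow> k < length xs - 2 \<Longrightarrow> remove_pair i xs ! k = xs ! skip_pair i k"
  by (simp add: remove_pair_def skip_pair_def nth_append)

lemma nths_remove_pair: "nths xs (- {i, Suc i}) = remove_pair i xs"
proof (cases "i \<le> length xs")
  case True
  have "nths (drop i xs) {j. j + i \<in> - {i, Suc i}} = nths (drop i xs) {j. j \<ge> 2}"
    by (rule arg_cong[where f = "nths _"]) auto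
  also have "\<dots> = drop (Suc (Suc i)) xs" by (simp add: drop_eq_nths[symmetric])
  finally show ?thesis
    using True nths_append[of "take i xs" "drop i xs"] nths_all[of "take i xs" "- {i, Suc i}"]
    by (simp add: remove_pair_def min_absorb2)
next
  case False
  then show ?thesis by (simp add: remove_pair_def nths_all)
qed

lemma comp_list_remove_pair:
  assumes "Suc i < length fs" and "fs ! Suc i \<circ> fs ! i = id"
  shows "comp_list (remove_pair i fs) = comp_list fs"
proof -
  have "fs = take i fs @ [fs ! i, fs ! Suc i] @ drop (Suc (Suc i)) fs"
    using assms(1) by (simp add: Cons_nth_drop_Suc)
  then have "comp_list fs =
      comp_list (drop (Suc (Suc i)) fs) \<circ> (fs ! Suc i \<circ> fs ! i) \<circ> comp_list (take i fs)"
    by (metis comp_list_append comp_list_Cons comp_list_Nil o_assoc id_o append_Cons append_Nil)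
  then show ?thesis using assms(2) by (simp add: remove_pair_def)
qed

lemma nths_cong: "(\<And>k. k < length xs \<Longrightarrow> k \<in> A \<longleftrightarrow> k \<in> B) \<Longrightarrow> nths xs A = nths xs B"
  unfolding nths_def by (auto intro!: arg_cong[where f = "map fst"] filter_cong simp: set_zip)

lemma nths_remove_two_pairs:
  assumes "Suc i < j" "j \<le> length xs"
  shows "nths xs (- {i, Suc i, j, Suc j}) = remove_pair i (remove_pair j xs)"
proof -
  have "nths (take j xs) (- {i, Suc i, j, Suc j}) = nths (take j xs) (- {i, Suc i})"
    by (rule nths_cong) auto
  moreover have
    "nths (drop j xs) {n. n + j \<in> - {i, Suc i, j, Suc j}} = nths (drop j xs) {n. n \<ge> 2}"
    using assms(1) by (intro arg_cong[where f = "nths _"]) auto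
  ultimately have "nths xs (- {i, Suc i, j, Suc j}) = remove_pair i (take j xs) @ drop (Suc (Suc j)) xs"
    using assms nths_append[of "take j xs" "drop j xs"]
    by (simp add: nths_remove_pair drop_eq_nths[symmetric] min_absorb2)
  then show ?thesis using assms by (simp add: remove_pair_def)
qed

section \<open>Pass maps\<close>

text \<open>The bijection \<open>\<beta>\<^sub>L\<^sup>j\<^sup>k\<close> of a pass under (resp. over) a crossing of sign \<open>s\<close>,
  where \<open>l\<close> and \<open>l'\<close> are the colours of the incoming and outgoing semiarcs of the other
  strand.\<close>

definition beta_under :: "('x \<Rightarrow> 'x \<Rightarrow> 'x) \<Rightarrow> bool \<Rightarrow> 'x \<Rightarrow> 'x \<Rightarrow> 'x \<Rightarrow> 'x" where
  "beta_under \<beta> s l l' = (if s then \<beta> l' else inv (\<beta> l))"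

definition beta_over :: "('x \<Rightarrow> 'x \<Rightarrow> 'x) \<Rightarrow> bool \<Rightarrow> 'x \<Rightarrow> 'x \<Rightarrow> 'x \<Rightarrow> 'x" where
  "beta_over \<beta> s l l' = (if s then inv (\<beta> l) else \<beta> l')"

lemma
  assumes "\<And>a. bij (\<beta> a)"
  shows beta_over_comp_beta_under: "beta_over \<beta> s l l' \<circ> beta_under \<beta> s l' l = id"
    and beta_under_comp_beta_over: "beta_under \<beta> s l l' \<circ> beta_over \<beta> s l' l = id"
    and beta_under_opposite_cancel: "beta_under \<beta> (\<not> s) l l' \<circ> beta_under \<beta> s l' l = id"
    and beta_over_opposite_cancel: "beta_over \<beta> (\<not> s) l l' \<circ> beta_over \<beta> s l' l = id"
  using assms by (simp_all add: beta_under_def beta_over_def bij_is_inj inv_o_cancel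
      surj_iff[THEN iffD1] bij_is_surj)

lemma pos_of_eqI: "distinct P \<Longrightarrow> i < length P \<Longrightarrow> P ! i = a \<Longrightarrow> pos_of P a = i"
  unfolding pos_of_def by (rule the_equality) (auto simp: nth_eq_iff_index_eq)

lemma pos_of_in_set:
  assumes "distinct P" "a \<in> set P"
  shows "pos_of P a < length P" "P ! pos_of P a = a"
proof -
  obtain i where "i < length P" "P ! i = a" using assms(2) by (auto simp: in_set_conv_nth)
  then show "pos_of P a < length P" "P ! pos_of P a = a" using pos_of_eqI[OF assms(1)] by auto
qed

lemma wf_diag_distinct: "wf_diag P \<Longrightarrow> distinct P"
  by (simp add: wf_diag_def)

lemma wf_diag_partner: "wf_diag P \<Longrightarrow> (c, ov) \<in> set P \<Longrightarrow> (c, \<not> ov) \<in> set P"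
  by (simp add: wf_diag_def)

lemma blw_eq_comp_list: "blw \<beta> P sg C = comp_list (map (pass_map \<beta> P sg C) [0..<length P])"
  unfolding blw_def comp_list_def foldl_conv_fold fold_map by (simp add: comp_def[abs_def])

lemma pass_map_nth:
  assumes "distinct P" "p < length P" "P ! p = (c, False)" "q < length P" "P ! q = (c, True)"
  shows pass_map_nth_under: "pass_map \<beta> P sg C p = beta_under \<beta> (sg c) (C ! q) (C ! Suc q)"
    and pass_map_nth_over: "pass_map \<beta> P sg C q = beta_over \<beta> (sg c) (C ! p) (C ! Suc p)"
  using assms pos_of_eqI[OF assms(1,2,3)] pos_of_eqI[OF assms(1,4,5)]
  by (simp_all add: pass_map_def beta_under_def beta_over_def)

lemma pass_map_cong:
  assumes "P' ! k' = (c, ov)" "P ! k = (c, ov)" "sg' c = sg c"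
    and "C' ! pos_of P' (c, \<not> ov) = C ! pos_of P (c, \<not> ov)"
    and "C' ! Suc (pos_of P' (c, \<not> ov)) = C ! Suc (pos_of P (c, \<not> ov))"
  shows "pass_map \<beta> P' sg' C' k' = pass_map \<beta> P sg C k"
  using assms by (cases ov) (simp_all add: pass_map_def Let_def)

lemma pass_map_reindex:
  assumes wf: "wf_diag P" "wf_diag P'" and signs: "sgn_agree P' sg sg'"
    and e: "\<And>k. k < length P' \<Longrightarrow>
      e k < length P \<and> P' ! k = P ! e k \<and> C' ! k = C ! e k \<and> C' ! Suc k = C ! Suc (e k)"
    and k: "k < length P'"
  shows "pass_map \<beta> P' sg' C' k = pass_map \<beta> P sg C (e k)"
proof -
  obtain c ov where pass: "P' ! k = (c, ov)" by (cases "P' ! k")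
  have "(c, \<not> ov) \<in> set P'"
    using wf_diag_partner[OF wf(2)] nth_mem[OF k] pass by metis
  then have partner: "pos_of P' (c, \<not> ov) < length P'" "P' ! pos_of P' (c, \<not> ov) = (c, \<not> ov)"
    using pos_of_in_set wf_diag_distinct[OF wf(2)] by blast+
  then have "pos_of P (c, \<not> ov) = e (pos_of P' (c, \<not> ov))"
    using e pos_of_eqI[OF wf_diag_distinct[OF wf(1)]] by metis
  moreover have "sg' c = sg c"
    using signs pass nth_mem[OF k] unfolding sgn_agree_def by force
  ultimately show ?thesis
    using pass e[OF k] e[OF partner(1)] by (intro pass_map_cong[where c = c and ov = ov]) auto
qed

lemma inside_iff: "inside S k \<longleftrightarrow> k \<in> Suc ` S"
  by (cases k) (auto simp: inside_def)

lemma agree_rm_nth: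
  assumes "agree_rm P C S C'" "n \<le> length P" "n \<notin> Suc ` S"
  shows "C' ! (n - card {j \<in> seg_pos S. j < n}) = C ! n"
proof -
  have "\<not> inside S n" using assms(3) by (simp add: inside_iff)
  then show ?thesis using assms(1,2) by (simp add: agree_rm_def)
qed

section \<open>Reidemeister moves I and II\<close>

lemma kink_pass_maps_cancel:
  assumes bij: "\<And>a. bij (\<beta> a)" and "distinct P" and i: "Suc i < length P"
    and same: "fst (P ! i) = fst (P ! Suc i)" and col: "C ! Suc (Suc i) = C ! i"
  shows "pass_map \<beta> P sg C (Suc i) \<circ> pass_map \<beta> P sg C i = id"
proof -
  obtain c ov where i_pass: "P ! i = (c, ov)" by (cases "P ! i")
  have "P ! Suc i \<noteq> P ! i" using assms(2) i by (simp add: nth_eq_iff_index_eq)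
  then have Si_pass: "P ! Suc i = (c, \<not> ov)" using same i_pass by (cases "P ! Suc i") auto
  show ?thesis
  proof (cases ov)
    case False
    then show ?thesis
      using pass_map_nth[OF assms(2), of i c "Suc i" \<beta> sg C] i i_pass Si_pass col
        beta_over_comp_beta_under[of \<beta>, OF bij] by simp
  next
    case True
    then show ?thesis
      using pass_map_nth[OF assms(2), of "Suc i" c i \<beta> sg C] i i_pass Si_pass col
        beta_under_comp_beta_over[of \<beta>, OF bij] by simp
  qed
qed

lemma R1_reduce_blw:
  assumes bij: "\<And>a. bij (\<beta> a)" and wf: "wf_diag P" "wf_diag P'"
    and move: "R1_reduce (P, sg, C) (P', sg', C')"
  shows "blw \<beta> P' sg' C' = blw \<beta> P sg C"
proof -
  obtain i where i: "Suc i < length P" "fst (P ! i) = fst (P ! Suc i)"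
    and P': "P' = nths P (- seg_pos {i})" and signs: "sgn_agree P' sg sg'" and agree: "agree_rm P C {i} C'"
    using move by (auto simp: R1_reduce_def)
  have P': "P' = remove_pair i P"
    using P' nths_remove_pair[of P i] by (simp add: seg_pos_def insert_commute)
  have len: "length P' = length P - 2" using P' i by (simp add: length_remove_pair)
  have card: "card {j \<in> seg_pos {i}. j < n} = (if n \<le> i then 0 else if n = Suc i then 1 else 2)" for n
  proof -
    have "{j \<in> seg_pos {i}. j < n} = (if n \<le> i then {} else if n = Suc i then {i} else {i, Suc i})"
      by (auto simp: seg_pos_def)
    then show ?thesis by simp
  qed
  have C_skip: "C' ! k = C ! skip_pair i k" if "k \<le> length P'" for k
    using agree_rm_nth[OF agree, of "skip_pair i k"] that len i card[of "skip_pair i k"]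
    by (simp add: skip_pair_def split: if_splits)
  have col: "C ! Suc (Suc i) = C ! i"
    using agree_rm_nth[OF agree, of i] agree_rm_nth[OF agree, of "Suc (Suc i)"] i card by simp
  have reindex: "skip_pair i k < length P \<and> P' ! k = P ! skip_pair i k \<and>
      C' ! k = C ! skip_pair i k \<and> C' ! Suc k = C ! Suc (skip_pair i k)" if "k < length P'" for k
    using that len i P' nth_remove_pair[OF i(1)] C_skip[of k] C_skip[of "Suc k"] col
    by (cases "Suc k = i") (auto simp: skip_pair_def)
  define fs where "fs = map (pass_map \<beta> P sg C) [0..<length P]"
  have "map (pass_map \<beta> P' sg' C') [0..<length P'] = remove_pair i fs"
    using i len pass_map_reindex[OF wf signs reindex] nth_remove_pair[of i fs] reindex
    by (intro nth_equalityI) (simp_all add: fs_def length_remove_pair)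
  moreover have "comp_list (remove_pair i fs) = comp_list fs"
    using i kink_pass_maps_cancel[OF bij wf_diag_distinct[OF wf(1)] i col]
    by (intro comp_list_remove_pair) (simp_all add: fs_def)
  ultimately show ?thesis by (simp add: blw_eq_comp_list fs_def)
qed

lemma bigon_pass_maps_cancel:
  assumes bij: "\<And>a. bij (\<beta> a)" and "distinct P" and i: "Suc i < length P"
    and passes: "P ! i = (c, ov)" "P ! Suc i = (d, ov)"
    and partners: "p < length P" "P ! p = (c, \<not> ov)" "q < length P" "P ! q = (d, \<not> ov)"
    and adjacent: "(p, q) = (j, Suc j) \<or> (p, q) = (Suc j, j)"
    and signs: "sg d = (\<not> sg c)" and col: "C ! Suc (Suc j) = C ! j"
  shows "pass_map \<beta> P sg C (Suc i) \<circ> pass_map \<beta> P sg C i = id"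
proof (cases ov)
  case False
  then show ?thesis
    using pass_map_nth_under[OF assms(2), of i c p \<beta> sg C]
      pass_map_nth_under[OF assms(2), of "Suc i" d q \<beta> sg C] i passes partners adjacent signs col
      beta_under_opposite_cancel[of \<beta> True, OF bij] beta_under_opposite_cancel[of \<beta> False, OF bij]
    by auto
next
  case True
  then show ?thesis
    using pass_map_nth_over[OF assms(2), of p c i \<beta> sg C]
      pass_map_nth_over[OF assms(2), of q d "Suc i" \<beta> sg C] i passes partners adjacent signs col
      beta_over_opposite_cancel[of \<beta> True, OF bij] beta_over_opposite_cancel[of \<beta> False, OF bij]
    by auto
qed

lemma R2_reduce_blw:
  assumes bij: "\<And>a. bij (\<beta> a)" and wf: "wf_diag P" "wf_diag P'"
    and move: "R2_reduce (P, sg, C) (P', sg', C')"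
  shows "blw \<beta> P' sg' C' = blw \<beta> P sg C"
proof -
  obtain i j c d ov where ij: "Suc i < j" "Suc j < length P"
    and i_passes: "P ! i = (c, ov)" "P ! Suc i = (d, ov)"
    and j_passes: "(P ! j = (c, \<not> ov) \<and> P ! Suc j = (d, \<not> ov)) \<or>
                   (P ! j = (d, \<not> ov) \<and> P ! Suc j = (c, \<not> ov))"
    and sgd: "sg d = (\<not> sg c)"
    and P': "P' = nths P (- seg_pos {i, j})" and signs: "sgn_agree P' sg sg'"
    and agree: "agree_rm P C {i, j} C'"
    using move unfolding R2_reduce_def by blast
  have P': "P' = remove_pair i (remove_pair j P)"
    using P' ij nths_remove_two_pairs[of i j P] by (simp add: seg_pos_def insert_commute)
  have len: "length P' = length P - 4" using P' ij by (simp add: length_remove_pair)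
  define e where "e k = skip_pair j (skip_pair i k)" for k
  have card: "card {x \<in> seg_pos {i, j}. x < n} =
      (if n \<le> i then 0 else if n = Suc i then 1 else if n \<le> j then 2 else if n = Suc j then 3 else 4)" for n
  proof -
    have "{x \<in> seg_pos {i, j}. x < n} = (if n \<le> i then {} else if n = Suc i then {i}
        else if n \<le> j then {i, Suc i} else if n = Suc j then {i, Suc i, j} else {i, Suc i, j, Suc j})"
      using ij by (auto simp: seg_pos_def)
    then show ?thesis using ij by simp
  qed
  have C_skip: "C' ! k = C ! e k" if "k \<le> length P'" for k
    using agree_rm_nth[OF agree, of "e k"] that len ij card[of "e k"]
    by (simp add: e_def skip_pair_def split: if_splits)
  have col: "C ! Suc (Suc i) = C ! i" "C ! Suc (Suc j) = C ! j"
    using agree_rm_nth[OF agree, of i] agree_rm_nth[OF agree, of "Suc (Suc i)"]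
      agree_rm_nth[OF agree, of j] agree_rm_nth[OF agree, of "Suc (Suc j)"] ij card
    by simp_all
  have reindex: "e k < length P \<and> P' ! k = P ! e k \<and>
      C' ! k = C ! e k \<and> C' ! Suc k = C ! Suc (e k)" if "k < length P'" for k
    using that len ij P' nth_remove_pair[of i "remove_pair j P"] nth_remove_pair[of j P]
      C_skip[of k] C_skip[of "Suc k"] col
    by (cases "Suc k = i"; cases "Suc (Suc (Suc k)) = j") (auto simp: e_def skip_pair_def length_remove_pair)
  define fs where "fs = map (pass_map \<beta> P sg C) [0..<length P]"
  have "map (pass_map \<beta> P' sg' C') [0..<length P'] = remove_pair i (remove_pair j fs)"
    using ij len pass_map_reindex[OF wf signs reindex] reindex
      nth_remove_pair[of i "remove_pair j fs"] nth_remove_pair[of j fs]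
    by (intro nth_equalityI) (simp_all add: fs_def e_def length_remove_pair skip_pair_def)
  moreover have "fs ! Suc i \<circ> fs ! i = id" and "fs ! Suc j \<circ> fs ! j = id"
    using j_passes
  proof (safe elim!: disjE)
    assume "P ! j = (c, \<not> ov)" "P ! Suc j = (d, \<not> ov)"
    then show "fs ! Suc i \<circ> fs ! i = id" "fs ! Suc j \<circ> fs ! j = id"
      using bigon_pass_maps_cancel[OF bij wf_diag_distinct[OF wf(1)], of i c ov d j "Suc j" j sg C]
        bigon_pass_maps_cancel[OF bij wf_diag_distinct[OF wf(1)], of j c "\<not> ov" d i "Suc i" i sg C]
        ij i_passes sgd col by (simp_all add: fs_def)
  next
    assume "P ! j = (d, \<not> ov)" "P ! Suc j = (c, \<not> ov)"
    then show "fs ! Suc i \<circ> fs ! i = id" "fs ! Suc j \<circ> fs ! j = id"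
      using bigon_pass_maps_cancel[OF bij wf_diag_distinct[OF wf(1)], of i c ov d "Suc j" j j sg C]
        bigon_pass_maps_cancel[OF bij wf_diag_distinct[OF wf(1)], of j d "\<not> ov" c "Suc i" i i sg C]
        ij i_passes sgd col by (simp_all add: fs_def)
  qed
  then have "comp_list (remove_pair i (remove_pair j fs)) = comp_list fs"
    using ij nth_remove_pair[of j fs] comp_list_remove_pair[of i "remove_pair j fs"]
      comp_list_remove_pair[of j fs]
    by (simp add: fs_def length_remove_pair skip_pair_def)
  ultimately show ?thesis by (simp add: blw_eq_comp_list fs_def)
qed

section \<open>Reidemeister move III\<close>

lemma inv_comp_eq_comp_inv:
  assumes "bij g" "bij h" "f \<circ> g = h \<circ> k"
  shows "inv h \<circ> f = k \<circ> inv g"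
proof -
  have "g \<circ> inv g = id" using assms(1) by (simp add: bij_is_surj surj_iff[THEN iffD1])
  then have "inv h \<circ> f = inv h \<circ> (f \<circ> g) \<circ> inv g" by (simp add: comp_assoc)
  also have "\<dots> = (inv h \<circ> h) \<circ> k \<circ> inv g" using assms(3) by (simp add: comp_assoc)
  also have "\<dots> = k \<circ> inv g" using assms(2) by (simp add: inv_o_cancel bij_is_inj)
  finally show ?thesis .
qed

text \<open>The third biquandle axiom at a crossing, \<open>\<beta>\<^sub>r \<circ> \<beta>\<^sub>v = \<beta>\<^sub>w \<circ> \<beta>\<^sub>u\<close>, together with the three
  equivalent forms obtained by moving inverses across; these are the shapes in which the
  composite of two pass maps occurs in a Reidemeister III move.\<close>

definition crossing_relations :: "('x \<Rightarrow> 'x \<Rightarrow> 'x) \<Rightarrow> 'x \<Rightarrow> 'x \<Rightarrow> 'x \<Rightarrow> 'x \<Rightarrow> bool" where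
  "crossing_relations \<beta> u v w r \<longleftrightarrow>
     \<beta> r \<circ> \<beta> v = \<beta> w \<circ> \<beta> u \<and> inv (\<beta> w) \<circ> \<beta> r = \<beta> u \<circ> inv (\<beta> v) \<and>
     inv (\<beta> u) \<circ> inv (\<beta> w) = inv (\<beta> v) \<circ> inv (\<beta> r) \<and> \<beta> v \<circ> inv (\<beta> u) = inv (\<beta> r) \<circ> \<beta> w"

lemma biquandle_bij_beta: "is_biquandle \<alpha> \<beta> \<Longrightarrow> bij (\<beta> a)"
  by (simp add: is_biquandle_def)

lemma biquandle_crossing_relations:
  assumes "is_biquandle \<alpha> \<beta>"
  shows "crossing_relations \<beta> u v (\<alpha> u v) (\<beta> v u)"
proof -
  note bij = biquandle_bij_beta[OF assms] bij_imp_bij_inv[OF biquandle_bij_beta[OF assms]]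
  have "\<beta> (\<beta> v u) \<circ> \<beta> v = \<beta> (\<alpha> u v) \<circ> \<beta> u"
    using assms unfolding is_biquandle_def by blast
  moreover note inv_comp_eq_comp_inv[OF bij(1,1) this]
  moreover note inv_comp_eq_comp_inv[OF bij(1,1) this]
  moreover note inv_comp_eq_comp_inv[OF bij(2,2) this]
  ultimately show ?thesis
    unfolding crossing_relations_def using biquandle_bij_beta[OF assms] by (simp add: inv_inv_eq)
qed

lemma coloring_crossing_relations:
  assumes "is_biquandle \<alpha> \<beta>" "wf_diag P" "coloring \<alpha> \<beta> P sg C" "(c, True) \<in> set P"
  defines "p \<equiv> pos_of P (c, False)" and "q \<equiv> pos_of P (c, True)"
  shows "if sg c then crossing_relations \<beta> (C ! p) (C ! Suc q) (C ! q) (C ! Suc p)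
         else crossing_relations \<beta> (C ! Suc p) (C ! q) (C ! Suc q) (C ! p)"
proof -
  have "(c, False) \<in> set P" using wf_diag_partner[OF assms(2,4)] by simp
  then have "p < length P" "P ! p = (c, False)" "q < length P" "P ! q = (c, True)"
    using pos_of_in_set[OF wf_diag_distinct[OF assms(2)]] assms(4) unfolding p_def q_def by blast+
  then have "if sg c then C ! Suc p = \<beta> (C ! Suc q) (C ! p) \<and> C ! q = \<alpha> (C ! p) (C ! Suc q)
        else C ! p = \<beta> (C ! q) (C ! Suc p) \<and> C ! Suc q = \<alpha> (C ! Suc p) (C ! q)"
    using assms(3) unfolding coloring_def by blast
  then show ?thesis by (cases "sg c") (simp_all add: biquandle_crossing_relations[OF assms(1)])
qed

locale R3_configuration =
  fixes \<alpha> \<beta> :: "'x \<Rightarrow> 'x \<Rightarrow> 'x" and P P' :: "pass list" and sg sg' :: "nat \<Rightarrow> bool"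
    and C C' :: "'x list" and t m b x y z :: nat
  assumes biquandle: "is_biquandle \<alpha> \<beta>"
    and wf: "wf_diag P" "wf_diag P'"
    and coloring: "coloring \<alpha> \<beta> P sg C" "coloring \<alpha> \<beta> P' sg' C'"
    and segments: "Suc t < length P" "Suc m < length P" "Suc b < length P"
    and disjoint: "{t, Suc t} \<inter> {m, Suc m} = {}" "{t, Suc t} \<inter> {b, Suc b} = {}"
      "{m, Suc m} \<inter> {b, Suc b} = {}"
    and crossings: "x \<noteq> y" "x \<noteq> z" "y \<noteq> z"
    and top: "{P ! t, P ! Suc t} = {(x, True), (y, True)}"
    and middle: "{P ! m, P ! Suc m} = {(x, False), (z, True)}"
    and bottom: "{P ! b, P ! Suc b} = {(y, False), (z, False)}"
    and triangle: "let sT = sgn_int (P ! t = (x, True)); sM = sgn_int (P ! m = (x, False));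
               sB = sgn_int (P ! b = (y, False))
           in sgn_int (sg x) * sT * sM = sgn_int (sg y) * sT * sB \<and>
              sgn_int (sg y) * sT * sB = sgn_int (sg z) * sM * sB"
    and length: "length P' = length P"
    and P'_nth: "\<forall>k < length P. P' ! k = (if k \<in> {t, m, b} then P ! Suc k
                                    else if 0 < k \<and> k - 1 \<in> {t, m, b} then P ! (k - 1)
                                    else P ! k)"
    and signs: "sgn_agree P' sg sg'"
    and C'_nth: "\<forall>k \<le> length P. \<not> inside {t, m, b} k \<longrightarrow> C' ! k = C ! k"
begin

definition "sT \<longleftrightarrow> P ! t = (x, True)"
definition "sM \<longleftrightarrow> P ! m = (x, False)"
definition "sB \<longleftrightarrow> P ! b = (y, False)"

lemma passes:
  "P ! t = (if sT then (x, True) else (y, True))" "P ! Suc t = (if sT then (y, True) else (x, True))"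
  "P ! m = (if sM then (x, False) else (z, True))" "P ! Suc m = (if sM then (z, True) else (x, False))"
  "P ! b = (if sB then (y, False) else (z, False))" "P ! Suc b = (if sB then (z, False) else (y, False))"
  using top middle bottom crossings by (auto simp: sT_def sM_def sB_def doubleton_eq_iff)

lemma passes_after:
  "P' ! t = P ! Suc t" "P' ! Suc t = P ! t" "P' ! m = P ! Suc m" "P' ! Suc m = P ! m"
  "P' ! b = P ! Suc b" "P' ! Suc b = P ! b"
  using P'_nth segments disjoint by auto

lemma sign_relations: "sg y = (sg x = (sM = sB))" "sg z = (sg y = (sT = sM))"
  using triangle unfolding Let_def sT_def[symmetric] sM_def[symmetric] sB_def[symmetric]
  by (cases sT; cases sM; cases sB; cases "sg x"; cases "sg y"; cases "sg z"; simp add: sgn_int_def)+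

lemma positions:
  "pos_of P (x, True) = (if sT then t else Suc t)" "pos_of P (y, True) = (if sT then Suc t else t)"
  "pos_of P (x, False) = (if sM then m else Suc m)" "pos_of P (z, True) = (if sM then Suc m else m)"
  "pos_of P (y, False) = (if sB then b else Suc b)" "pos_of P (z, False) = (if sB then Suc b else b)"
  "pos_of P' (x, True) = (if sT then Suc t else t)" "pos_of P' (y, True) = (if sT then t else Suc t)"
  "pos_of P' (x, False) = (if sM then Suc m else m)" "pos_of P' (z, True) = (if sM then m else Suc m)"
  "pos_of P' (y, False) = (if sB then Suc b else b)" "pos_of P' (z, False) = (if sB then b else Suc b)"
  using passes passes_after segments length wf_diag_distinct[OF wf(1)] wf_diag_distinct[OF wf(2)]
  by (auto intro!: pos_of_eqI)

lemma colors_kept: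
  "C' ! t = C ! t" "C' ! Suc (Suc t) = C ! Suc (Suc t)" "C' ! m = C ! m"
  "C' ! Suc (Suc m) = C ! Suc (Suc m)" "C' ! b = C ! b" "C' ! Suc (Suc b) = C ! Suc (Suc b)"
  using C'_nth segments disjoint by (auto simp: inside_iff)

lemma over_passes_present:
  "(x, True) \<in> set P" "(y, True) \<in> set P" "(z, True) \<in> set P"
  "(x, True) \<in> set P'" "(y, True) \<in> set P'" "(z, True) \<in> set P'"
proof -
  have "P ! t \<in> set P" "P ! Suc t \<in> set P" "P ! m \<in> set P" "P ! Suc m \<in> set P"
    "P' ! t \<in> set P'" "P' ! Suc t \<in> set P'" "P' ! m \<in> set P'" "P' ! Suc m \<in> set P'"
    using segments length by simp_all
  then show "(x, True) \<in> set P" "(y, True) \<in> set P" "(z, True) \<in> set P"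
    "(x, True) \<in> set P'" "(y, True) \<in> set P'" "(z, True) \<in> set P'"
    unfolding passes_after passes by (cases sT; cases sM; simp)+
qed

lemma signs_kept: "sg' x = sg x" "sg' y = sg y" "sg' z = sg z"
  using signs over_passes_present unfolding sgn_agree_def by force+

lemma segment_composite_kept:
  assumes "s \<in> {t, m, b}"
  shows "pass_map \<beta> P' sg' C' (Suc s) \<circ> pass_map \<beta> P' sg' C' s =
         pass_map \<beta> P sg C (Suc s) \<circ> pass_map \<beta> P sg C s"
proof -
  note before = coloring_crossing_relations[OF biquandle wf(1) coloring(1)]
    and after = coloring_crossing_relations[OF biquandle wf(2) coloring(2)]
  note relations_x = before[OF over_passes_present(1)] after[OF over_passes_present(4)]
    and relations_y = before[OF over_passes_present(2)] after[OF over_passes_present(5)]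
    and relations_z = before[OF over_passes_present(3)] after[OF over_passes_present(6)]
  note facts = colors_kept signs_kept sign_relations
  \<comment> \<open>The maps of a segment are indexed by colours of the other two strands, and these are
    related by the crossing of those two strands: z for the top, y for the middle and x for the
    bottom segment.\<close>
  have "s = t \<or> s = m \<or> s = b" using assms by blast
  then show ?thesis
  proof (elim disjE)
    assume "s = t"
    then show ?thesis using relations_z facts
      by (cases sT; cases sM; cases sB; cases "sg x")
        (simp_all add: passes passes_after positions pass_map_def crossing_relations_def)
  next
    assume "s = m"
    then show ?thesis using relations_y facts
      by (cases sT; cases sM; cases sB; cases "sg x")
        (simp_all add: passes passes_after positions pass_map_def crossing_relations_def)
  next
    assume "s = b"
    then show ?thesis using relations_x facts
      by (cases sT; cases sM; cases sB; cases "sg x")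
        (simp_all add: passes passes_after positions pass_map_def crossing_relations_def)
  qed
qed

lemma crossing_passes_in_segments:
  assumes "k < length P"
  shows "fst (P ! k) \<in> {x, y, z} \<longleftrightarrow> k \<in> {t, m, b} \<union> Suc ` {t, m, b}"
proof
  assume "fst (P ! k) \<in> {x, y, z}"
  then have "P ! k \<in> {P ! t, P ! Suc t, P ! m, P ! Suc m, P ! b, P ! Suc b}"
    using top middle bottom by (cases "P ! k") auto
  then show "k \<in> {t, m, b} \<union> Suc ` {t, m, b}"
    using assms segments wf_diag_distinct[OF wf(1)] by (auto simp: nth_eq_iff_index_eq)
next
  assume "k \<in> {t, m, b} \<union> Suc ` {t, m, b}"
  then show "fst (P ! k) \<in> {x, y, z}" using passes by auto
qed

lemma outside_pass_map_kept:
  assumes k: "k < length P" "k \<notin> {t, m, b}" "k \<notin> Suc ` {t, m, b}"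
  shows "pass_map \<beta> P' sg' C' k = pass_map \<beta> P sg C k"
proof -
  obtain c ov where pass: "P ! k = (c, ov)" by (cases "P ! k")
  have c: "c \<notin> {x, y, z}" using crossing_passes_in_segments[OF k(1)] k pass by auto
  have "P' ! k = P ! k" using P'_nth k by auto
  have "(c, \<not> ov) \<in> set P" using wf_diag_partner[OF wf(1)] nth_mem[OF k(1)] pass by metis
  then obtain p where p: "p < length P" "P ! p = (c, \<not> ov)" by (auto simp: in_set_conv_nth)
  then have p_out: "p \<notin> {t, m, b}" "p \<notin> Suc ` {t, m, b}"
    using crossing_passes_in_segments[OF p(1)] c by auto
  then have "pos_of P' (c, \<not> ov) = p" "pos_of P (c, \<not> ov) = p"
    using P'_nth p length wf_diag_distinct[OF wf(1)] wf_diag_distinct[OF wf(2)]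
    by (auto intro!: pos_of_eqI)
  moreover have "C' ! p = C ! p" "C' ! Suc p = C ! Suc p"
    using C'_nth p p_out by (auto simp: inside_iff)
  moreover have "sg' c = sg c"
    using signs \<open>P' ! k = P ! k\<close> pass nth_mem[of k P'] k(1) length
    unfolding sgn_agree_def by force
  ultimately show ?thesis
    using \<open>P' ! k = P ! k\<close> pass by (intro pass_map_cong[where c = c and ov = ov]) auto
qed

lemma blw_kept: "blw \<beta> P' sg' C' = blw \<beta> P sg C"
  unfolding blw_eq_comp_list
proof (rule comp_list_eq_if_pairs_agree[where T = "{t, m, b}"])
  show "Suc s < length (map (pass_map \<beta> P sg C) [0..<length P]) \<and> Suc s \<notin> {t, m, b}"
    if "s \<in> {t, m, b}" for s
    using that segments disjoint by auto
  show "map (pass_map \<beta> P' sg' C') [0..<length P'] ! Suc s \<circ>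
        map (pass_map \<beta> P' sg' C') [0..<length P'] ! s =
      map (pass_map \<beta> P sg C) [0..<length P] ! Suc s \<circ> map (pass_map \<beta> P sg C) [0..<length P] ! s"
    if "s \<in> {t, m, b}" for s
    using that segments length segment_composite_kept[OF that] by (auto simp del: upt_Suc)
qed (use length outside_pass_map_kept in auto)

end

lemma R3_move_blw:
  assumes "is_biquandle \<alpha> \<beta>" "wf_diag P" "wf_diag P'"
    and "coloring \<alpha> \<beta> P sg C" "coloring \<alpha> \<beta> P' sg' C'"
    and "R3_move (P, sg, C) (P', sg', C')"
  shows "blw \<beta> P' sg' C' = blw \<beta> P sg C"
  using assms(6) unfolding R3_move_def prod.case
  by (elim exE conjE)
    (rule R3_configuration.blw_kept, rule R3_configuration.intro, (assumption | rule assms)+)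

theorem mainTheorem3:
  fixes \<alpha> \<beta> :: "'x::finite \<Rightarrow> 'x \<Rightarrow> 'x"
    and P P' :: "pass list" and sg sg' :: "nat \<Rightarrow> bool" and C C' :: "'x list"
  assumes "is_biquandle \<alpha> \<beta>"
    and "wf_diag P" and "wf_diag P'"
    and "coloring \<alpha> \<beta> P sg C" and "coloring \<alpha> \<beta> P' sg' C'"
    and "reid_move (P, sg, C) (P', sg', C')"
  shows "blw \<beta> P' sg' C' = blw \<beta> P sg C"
proof -
  have bij: "\<And>a. bij (\<beta> a)" using assms(1) by (rule biquandle_bij_beta)
  from assms(6) show ?thesis
    unfolding reid_move_def
  proof (elim disjE)
    assume "R1_reduce (P, sg, C) (P', sg', C')"
    then show ?thesis by (rule R1_reduce_blw[OF bij assms(2,3)])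
  next
    assume "R1_reduce (P', sg', C') (P, sg, C)"
    then show ?thesis by (rule R1_reduce_blw[OF bij assms(3,2), symmetric])
  next
    assume "R2_reduce (P, sg, C) (P', sg', C')"
    then show ?thesis by (rule R2_reduce_blw[OF bij assms(2,3)])
  next
    assume "R2_reduce (P', sg', C') (P, sg, C)"
    then show ?thesis by (rule R2_reduce_blw[OF bij assms(3,2), symmetric])
  next
    assume "R3_move (P, sg, C) (P', sg', C')"
    then show ?thesis by (rule R3_move_blw[OF assms(1-5)])
  next
    assume "R3_move (P', sg', C') (P, sg, C)"
    then show ?thesis by (rule R3_move_blw[OF assms(1,3,2,5,4), symmetric])
  qed
qed

end
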